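(* Let $(a,b,c,\lambda)\in(\mathbb F^\times)^4$ and $(\mu,\varphi,\omega^*,\omega^\varepsilon)\in\mathbb F^\times\times\mathbb F^3$. Suppose a $\triangle_q$-module $V$ contains a nonzero vector $v$ with $Bv=(\mu+\mu^{-1})v$, $(B-\mu q^2-\mu^{-1}q^{-2})Av=(q-q^{-1})\varphi v$, $\beta v=\omega^*v$ and $\gamma v=\omega^\varepsilon v$. Then $(a,b,c,\lambda)$ is feasible for $(\mu,\varphi,\omega^*,\omega^\varepsilon)$ if and only if both (i) $\mu=b\lambda^{-1}$ and (ii) there exists a $\triangle_q$-module homomorphism $M_\lambda(a,b,c)\to V$ sending $m_0$ to $v$.
   Context: $\mathbb F$ is an algebraically closed field and $q\in\mathbb F^\times$ is a root of unity of order $d\notin\{1,2,4\}$. $\triangle_q$ is the unital associative $\mathbb F$-algebra with generators $A,B,C$ subject to: each of $A+\frac{qBC-q^{-1}CB}{q^2-q^{-2}}$, $B+\frac{qCA-q^{-1}AC}{q^2-q^{-2}}$, $C+\frac{qAB-q^{-1}BA}{q^2-q^{-2}}$ is central; $\alpha,\beta,\gamma$ denote these multiplied by $q+q^{-1}$. For $(a,b,c,\lambda)\in(\mathbb F^\times)^4$, $i\in\mathbb N$: $\theta_i=a\lambda^{-1}q^{2i}+a^{-1}\lambda q^{-2i}$, $\theta_i^*=b\lambda^{-1}q^{2i}+b^{-1}\lambda q^{-2i}$, $\varphi_i=a^{-1}b^{-1}\lambda q(q^i-q^{-i})(\lambda^{-1}q^{i-1}-\lambda q^{1-i})(q^{-i}-abc\lambda^{-1}q^{i-1})(q^{-i}-abc^{-1}\lambda^{-1}q^{i-1})$.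 $M_\lambda(a,b,c)$ is the $\triangle_q$-module with basis $\{m_i\}_{i\in\mathbb N}$ with $(A-\theta_i)m_i=m_{i+1}$, $(B-\theta_i^* )m_i=\varphi_im_{i-1}$, and $\alpha,\beta,\gamma$ acting as $(b+b^{-1})(c+c^{-1})+(a+a^{-1})(\lambda q+\lambda^{-1}q^{-1})$, $(c+c^{-1})(a+a^{-1})+(b+b^{-1})(\lambda q+\lambda^{-1}q^{-1})$, $(a+a^{-1})(b+b^{-1})+(c+c^{-1})(\lambda q+\lambda^{-1}q^{-1})$. $(a,b,c,\lambda)$ is called feasible for $(\mu,\varphi,\omega^*,\omega^\varepsilon)$ if $\mu=b\lambda^{-1}$, $\varphi=(c+c^{-1})(\lambda-\lambda^{-1})-(a+a^{-1})(bq-b^{-1}q^{-1})$, $\omega^*=(c+c^{-1})(a+a^{-1})+(b+b^{-1})(\lambda q+\lambda^{-1}q^{-1})$, and $\omega^\varepsilon=(a+a^{-1})(b+b^{-1})+(c+c^{-1})(\lambda q+\lambda^{-1}q^{-1})$. *)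

theory Defs
  imports "HOL-Computational_Algebra.Polynomial" "HOL-Library.Poly_Mapping"
begin

definition root_of_unity_order :: "'a::field \<Rightarrow> nat \<Rightarrow> bool" where
  "root_of_unity_order q d \<longleftrightarrow> 0 < d \<and> q ^ d = 1 \<and> (\<forall>k. 0 < k \<and> k < d \<longrightarrow> q ^ k \<noteq> 1)"

(* The operators alpha, beta, gamma of triangle_q (the central elements times q + q^-1),
   computed from the actions of the generators A, B, C with scalar multiplication sc *)
definition tri_alpha :: "'a::field \<Rightarrow> ('a \<Rightarrow> 'v::ab_group_add \<Rightarrow> 'v) \<Rightarrow> ('v \<Rightarrow> 'v) \<Rightarrow> ('v \<Rightarrow> 'v) \<Rightarrow> ('v \<Rightarrow> 'v) \<Rightarrow> 'v \<Rightarrow> 'v" where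
  "tri_alpha q sc A B C x = sc (q + inverse q)
     (A x + sc (inverse (q^2 - inverse q ^ 2)) (sc q (B (C x)) - sc (inverse q) (C (B x))))"

definition tri_beta :: "'a::field \<Rightarrow> ('a \<Rightarrow> 'v::ab_group_add \<Rightarrow> 'v) \<Rightarrow> ('v \<Rightarrow> 'v) \<Rightarrow> ('v \<Rightarrow> 'v) \<Rightarrow> ('v \<Rightarrow> 'v) \<Rightarrow> 'v \<Rightarrow> 'v" where
  "tri_beta q sc A B C x = sc (q + inverse q)
     (B x + sc (inverse (q^2 - inverse q ^ 2)) (sc q (C (A x)) - sc (inverse q) (A (C x))))"

definition tri_gamma :: "'a::field \<Rightarrow> ('a \<Rightarrow> 'v::ab_group_add \<Rightarrow> 'v) \<Rightarrow> ('v \<Rightarrow> 'v) \<Rightarrow> ('v \<Rightarrow> 'v) \<Rightarrow> ('v \<Rightarrow> 'v) \<Rightarrow> 'v \<Rightarrow> 'v" where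
  "tri_gamma q sc A B C x = sc (q + inverse q)
     (C x + sc (inverse (q^2 - inverse q ^ 2)) (sc q (A (B x)) - sc (inverse q) (B (A x))))"

definition tri_module :: "'a::field \<Rightarrow> ('a \<Rightarrow> 'v::ab_group_add \<Rightarrow> 'v) \<Rightarrow> ('v \<Rightarrow> 'v) \<Rightarrow> ('v \<Rightarrow> 'v) \<Rightarrow> ('v \<Rightarrow> 'v) \<Rightarrow> bool" where
  "tri_module q sc A B C \<longleftrightarrow>
     Vector_Spaces.vector_space sc \<and>
     Vector_Spaces.linear sc sc A \<and> Vector_Spaces.linear sc sc B \<and> Vector_Spaces.linear sc sc C \<and>
     (\<forall>Z \<in> {tri_alpha q sc A B C, tri_beta q sc A B C, tri_gamma q sc A B C}.
        \<forall>X \<in> {A, B, C}. \<forall>x. Z (X x) = X (Z x))"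

definition thetaM :: "'a::field \<Rightarrow> 'a \<Rightarrow> 'a \<Rightarrow> nat \<Rightarrow> 'a" where
  "thetaM q a lam i = a * inverse lam * q ^ (2*i) + inverse a * lam * inverse q ^ (2*i)"

definition thetaM_s :: "'a::field \<Rightarrow> 'a \<Rightarrow> 'a \<Rightarrow> nat \<Rightarrow> 'a" where
  "thetaM_s q b lam i = b * inverse lam * q ^ (2*i) + inverse b * lam * inverse q ^ (2*i)"

definition phiM :: "'a::field \<Rightarrow> 'a \<Rightarrow> 'a \<Rightarrow> 'a \<Rightarrow> 'a \<Rightarrow> nat \<Rightarrow> 'a" where
  "phiM q a b c lam i = inverse a * inverse b * lam * q * (q ^ i - inverse q ^ i)
     * (inverse lam * q ^ i * inverse q - lam * q * inverse q ^ i)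
     * (inverse q ^ i - a * b * c * inverse lam * q ^ i * inverse q)
     * (inverse q ^ i - a * b * inverse c * inverse lam * q ^ i * inverse q)"

(* M_lambda(a,b,c) is modelled as the finitely supported sequences nat \<Rightarrow>\<^sub>0 F,
   with basis m_i = Poly_Mapping.single i 1 *)
definition Msc :: "'a::field \<Rightarrow> (nat \<Rightarrow>\<^sub>0 'a) \<Rightarrow> (nat \<Rightarrow>\<^sub>0 'a)" where
  "Msc t x = Poly_Mapping.map (\<lambda>y. t * y) x"

definition MA :: "'a::field \<Rightarrow> 'a \<Rightarrow> 'a \<Rightarrow> (nat \<Rightarrow>\<^sub>0 'a) \<Rightarrow> (nat \<Rightarrow>\<^sub>0 'a)" where
  "MA q a lam x = (\<Sum>i\<in>Poly_Mapping.keys x. Poly_Mapping.single i (Poly_Mapping.lookup x i * thetaM q a lam i)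
                                 + Poly_Mapping.single (Suc i) (Poly_Mapping.lookup x i))"

definition MB :: "'a::field \<Rightarrow> 'a \<Rightarrow> 'a \<Rightarrow> 'a \<Rightarrow> 'a \<Rightarrow> (nat \<Rightarrow>\<^sub>0 'a) \<Rightarrow> (nat \<Rightarrow>\<^sub>0 'a)" where
  "MB q a b c lam x = (\<Sum>i\<in>Poly_Mapping.keys x. Poly_Mapping.single i (Poly_Mapping.lookup x i * thetaM_s q b lam i)
       + (if i = 0 then 0 else Poly_Mapping.single (i - 1) (Poly_Mapping.lookup x i * phiM q a b c lam i)))"

(* scalar by which gamma acts on M_lambda(a,b,c) *)
definition gammaM :: "'a::field \<Rightarrow> 'a \<Rightarrow> 'a \<Rightarrow> 'a \<Rightarrow> 'a \<Rightarrow> 'a" where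
  "gammaM q a b c lam = (a + inverse a) * (b + inverse b) + (c + inverse c) * (lam * q + inverse lam * inverse q)"

(* the action of C on M_lambda(a,b,c), determined by gamma = (q+q^-1) C + (qAB - q^-1 BA)/(q - q^-1) *)
definition MC :: "'a::field \<Rightarrow> 'a \<Rightarrow> 'a \<Rightarrow> 'a \<Rightarrow> 'a \<Rightarrow> (nat \<Rightarrow>\<^sub>0 'a) \<Rightarrow> (nat \<Rightarrow>\<^sub>0 'a)" where
  "MC q a b c lam x = Msc (inverse (q + inverse q))
     (Msc (gammaM q a b c lam) x
      - Msc (inverse (q - inverse q))
          (Msc q (MA q a lam (MB q a b c lam x)) - Msc (inverse q) (MB q a b c lam (MA q a lam x))))"

definition M_hom :: "'a::field \<Rightarrow> 'a \<Rightarrow> 'a \<Rightarrow> 'a \<Rightarrow> 'a \<Rightarrow> ('a \<Rightarrow> 'v::ab_group_add \<Rightarrow> 'v)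
    \<Rightarrow> ('v \<Rightarrow> 'v) \<Rightarrow> ('v \<Rightarrow> 'v) \<Rightarrow> ('v \<Rightarrow> 'v) \<Rightarrow> ((nat \<Rightarrow>\<^sub>0 'a) \<Rightarrow> 'v) \<Rightarrow> bool" where
  "M_hom q a b c lam sc A B C f \<longleftrightarrow>
     Vector_Spaces.linear Msc sc f \<and>
     (\<forall>x. f (MA q a lam x) = A (f x)) \<and>
     (\<forall>x. f (MB q a b c lam x) = B (f x)) \<and>
     (\<forall>x. f (MC q a b c lam x) = C (f x))"

definition feasible :: "'a::field \<Rightarrow> 'a \<Rightarrow> 'a \<Rightarrow> 'a \<Rightarrow> 'a \<Rightarrow> 'a \<Rightarrow> 'a \<Rightarrow> 'a \<Rightarrow> 'a \<Rightarrow> bool" where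
  "feasible q a b c lam mu ph ws we \<longleftrightarrow>
     mu = b * inverse lam \<and>
     ph = (c + inverse c) * (lam - inverse lam) - (a + inverse a) * (b * q - inverse b * inverse q) \<and>
     ws = (c + inverse c) * (a + inverse a) + (b + inverse b) * (lam * q + inverse lam * inverse q) \<and>
     we = (a + inverse a) * (b + inverse b) + (c + inverse c) * (lam * q + inverse lam * inverse q)"

end

theory Submission
  imports Defs
begin

(* Eliminating C from the centrality of beta and gamma gives the cubic relation
     A^2 B - (q^2 + q^-2) A B A + B A^2 + (q^2 - q^-2)^2 B = (q^2 - q^-2)(q - q^-1) beta - (q - q^-1)^2 gamma A,
   valid as soon as q^4 <> 1. Put v_0 = v and v_(i+1) = (A - theta_i) v_i. Since beta and gamma
   commute with A, they act on every v_i by their scalars on v. Applied to v_i, the cubic relation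
   expresses B v_(i+2) through v_(i+2), v_(i+1), v_i, and identities between theta, theta* and phi
   turn this into
     B v_(i+2) = theta*_(i+2) v_(i+2) + phi_(i+2) v_(i+1) + (q^2 - q^-2)(q - q^-1)(omega* - betaM) v_i,
   where betaM is the value of omega* demanded by feasibility. Likewise
   (B - theta*_1) v_1 = (phi_1 + (q - q^-1)(varphi - varphiM)) v_0, and C is determined by gamma,
   A and B. For feasible parameters the v_i thus satisfy the defining relations of the m_i, and
   m_i |-> v_i is the homomorphism. Conversely a homomorphism sending m_0 to v sends m_i to v_i,
   so both defects vanish and gamma acts on v by its value on M_lambda(a,b,c). *)

lemma root_of_unity_order_nonzero:
  assumes "root_of_unity_order q d"
  shows "q \<noteq> 0"
  using assms unfolding root_of_unity_order_def by (metis power_0_left zero_neq_one)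

lemma root_of_unity_order_pow4_neq_1:
  fixes q :: "'a::field"
  assumes "root_of_unity_order q d" and "d \<notin> {1, 2, 4}"
  shows "q ^ 4 \<noteq> 1"
proof
  assume q4: "q ^ 4 = 1"
  from assms(1) have "0 < d" and qd: "q ^ d = 1" and minimal: "\<And>k. 0 < k \<Longrightarrow> k < d \<Longrightarrow> q ^ k \<noteq> 1"
    unfolding root_of_unity_order_def by auto
  have "\<not> 4 < d" using minimal[of 4] q4 by auto
  with \<open>0 < d\<close> assms(2) have "d = 3" by auto
  have "q ^ 4 = q ^ 3 * q" by algebra
  with qd q4 \<open>d = 3\<close> have "q = 1" by simp
  then show False using minimal[of 1] \<open>d = 3\<close> by simp
qed

lemma q_inverse_combinations_nonzero:
  fixes q :: "'a::field"
  assumes "q \<noteq> 0" and "q ^ 4 \<noteq> 1"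
  shows "q + inverse q \<noteq> 0" "q - inverse q \<noteq> 0" "q^2 - inverse q^2 \<noteq> 0"
proof -
  have "q^2 * (q^2 - inverse q^2) = q^4 - 1"
    using assms(1) by (simp add: field_simps eval_nat_numeral)
  then show nz: "q^2 - inverse q^2 \<noteq> 0" using assms(2) by auto
  have "(q + inverse q) * (q - inverse q) = q^2 - inverse q^2" by algebra
  then show "q + inverse q \<noteq> 0" "q - inverse q \<noteq> 0" using nz by auto
qed

(* theta_i, theta*_i and phi_i as functions of X = q^i, so that shifting the index multiplies X by q. *)
definition qtheta :: "'a::field \<Rightarrow> 'a \<Rightarrow> 'a \<Rightarrow> 'a" where
  "qtheta a lam X = a * inverse lam * X^2 + inverse a * lam * inverse X ^ 2"

definition qphi :: "'a::field \<Rightarrow> 'a \<Rightarrow> 'a \<Rightarrow> 'a \<Rightarrow> 'a \<Rightarrow> 'a \<Rightarrow> 'a" where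
  "qphi q a b c lam X = inverse a * inverse b * lam * q * (X - inverse X)
     * (inverse lam * X * inverse q - lam * q * inverse X)
     * (inverse X - a * b * c * inverse lam * X * inverse q)
     * (inverse X - a * b * inverse c * inverse lam * X * inverse q)"

lemma thetaM_eq_qtheta: "thetaM q a lam i = qtheta a lam (q ^ i)"
  unfolding thetaM_def qtheta_def by (simp add: power_mult[symmetric] power_inverse mult.commute)

lemma thetaM_s_eq_qtheta: "thetaM_s q b lam i = qtheta b lam (q ^ i)"
  unfolding thetaM_s_def qtheta_def by (simp add: power_mult[symmetric] power_inverse mult.commute)

lemma phiM_eq_qphi: "phiM q a b c lam i = qphi q a b c lam (q ^ i)"
  unfolding phiM_def qphi_def by (simp add: power_inverse)

lemma phiM_0 [simp]: "phiM q a b c lam 0 = 0"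
  by (simp add: phiM_def)

definition betaM :: "'a::field \<Rightarrow> 'a \<Rightarrow> 'a \<Rightarrow> 'a \<Rightarrow> 'a \<Rightarrow> 'a" where
  "betaM q a b c lam = (c + inverse c) * (a + inverse a) + (b + inverse b) * (lam * q + inverse lam * inverse q)"

definition varphiM :: "'a::field \<Rightarrow> 'a \<Rightarrow> 'a \<Rightarrow> 'a \<Rightarrow> 'a \<Rightarrow> 'a" where
  "varphiM q a b c lam = (c + inverse c) * (lam - inverse lam) - (a + inverse a) * (b * q - inverse b * inverse q)"

lemma feasible_iff:
  "feasible q a b c lam mu ph ws we \<longleftrightarrow>
     mu = b * inverse lam \<and> ph = varphiM q a b c lam \<and> ws = betaM q a b c lam \<and> we = gammaM q a b c lam"
  unfolding feasible_def varphiM_def betaM_def gammaM_def ..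

(* algebra treats inverse x as an independent variable, so each proof supplies x * inverse x = 1. *)
lemma qtheta_recurrence:
  fixes q b lam X :: "'a::field"
  assumes "q \<noteq> 0" "b \<noteq> 0" "lam \<noteq> 0" "X \<noteq> 0"
  shows "qtheta b lam X - (q^2 + inverse q^2) * qtheta b lam (X * q) + qtheta b lam (X * q^2) = 0"
proof -
  have "b * inverse b = 1" "lam * inverse lam = 1" "q * inverse q = 1" "X * inverse X = 1"
    using assms by simp_all
  then show ?thesis
    unfolding qtheta_def inverse_mult_distrib power_inverse[symmetric] by algebra
qed

lemma qtheta_quadratic_relation:
  fixes q a lam X :: "'a::field"
  assumes "q \<noteq> 0" "a \<noteq> 0" "lam \<noteq> 0" "X \<noteq> 0"
  shows "qtheta a lam (X * inverse q)^2 - (q^2 + inverse q^2) * qtheta a lam X * qtheta a lam (X * inverse q)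
           + qtheta a lam X ^ 2 + (q^2 - inverse q^2)^2 = 0"
proof -
  have "a * inverse a = 1" "lam * inverse lam = 1" "q * inverse q = 1" "X * inverse X = 1"
    using assms by simp_all
  then show ?thesis
    unfolding qtheta_def inverse_mult_distrib inverse_inverse_eq by algebra
qed

lemma qphi_first:
  fixes q a b c lam :: "'a::field"
  assumes "q \<noteq> 0" "a \<noteq> 0" "b \<noteq> 0" "c \<noteq> 0" "lam \<noteq> 0"
  shows "qphi q a b c lam q = qtheta a lam 1 * (qtheta b lam q - qtheta b lam 1) + (q - inverse q) * varphiM q a b c lam"
proof -
  have "a * inverse a = 1" "b * inverse b = 1" "c * inverse c = 1" "lam * inverse lam = 1" "q * inverse q = 1"
    using assms by simp_all
  then show ?thesis
    unfolding qtheta_def qphi_def varphiM_def inverse_1 power_one mult_1_right by algebra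
qed

lemma qphi_gamma_relation:
  fixes q a b c lam X :: "'a::field"
  assumes "q \<noteq> 0" "a \<noteq> 0" "b \<noteq> 0" "c \<noteq> 0" "lam \<noteq> 0" "X \<noteq> 0"
  shows "qtheta b lam X * (qtheta a lam X + qtheta a lam (X * q)) + qphi q a b c lam X
     - (q^2 + inverse q^2) * (qtheta b lam (X * q) * qtheta a lam (X * q) + qphi q a b c lam (X * q) + qtheta a lam X * qtheta b lam X)
     + qphi q a b c lam (X * q^2) + (qtheta a lam X + qtheta a lam (X * q)) * qtheta b lam (X * q)
     + (q - inverse q)^2 * gammaM q a b c lam = 0"
proof -
  have "a * inverse a = 1" "b * inverse b = 1" "c * inverse c = 1" "lam * inverse lam = 1"
    "q * inverse q = 1" "X * inverse X = 1"
    using assms by simp_all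
  then show ?thesis
    unfolding qtheta_def qphi_def gammaM_def inverse_mult_distrib power_inverse[symmetric] by algebra
qed

lemma qphi_beta_relation:
  fixes q a b c lam X :: "'a::field"
  assumes "q \<noteq> 0" "a \<noteq> 0" "b \<noteq> 0" "c \<noteq> 0" "lam \<noteq> 0" "X \<noteq> 0"
  shows "2 * qtheta b lam X * qtheta a lam X ^ 2
     + qphi q a b c lam X * (qtheta a lam (X * inverse q) + qtheta a lam X)
     - (q^2 + inverse q^2) * (qphi q a b c lam (X * q) + qtheta a lam X * qtheta b lam X) * qtheta a lam X
     - (q^2 + inverse q^2) * qtheta a lam X * qphi q a b c lam X
     + (qtheta a lam X + qtheta a lam (X * q)) * qphi q a b c lam (X * q)
     + (q^2 - inverse q^2)^2 * qtheta b lam X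
     - (q^2 - inverse q^2) * (q - inverse q) * betaM q a b c lam
     + (q - inverse q)^2 * gammaM q a b c lam * qtheta a lam X = 0"
proof -
  have "a * inverse a = 1" "b * inverse b = 1" "c * inverse c = 1" "lam * inverse lam = 1"
    "q * inverse q = 1" "X * inverse X = 1"
    using assms by simp_all
  then show ?thesis
    unfolding qtheta_def qphi_def gammaM_def betaM_def inverse_mult_distrib inverse_inverse_eq by algebra
qed

(* Identities between linear combinations of at most five vectors are proved by rewriting
   both sides into lincomb5 form and comparing coefficients; the congruence rule
   lincomb5_cong keeps the simplifier from rewriting the vectors themselves. *)
definition lincomb5 :: "('a \<Rightarrow> 'v \<Rightarrow> 'v) \<Rightarrow> 'a \<Rightarrow> 'a \<Rightarrow> 'a \<Rightarrow> 'a \<Rightarrow> 'a \<Rightarrow> 'v \<Rightarrow> 'v \<Rightarrow> 'v \<Rightarrow> 'v \<Rightarrow> 'v \<Rightarrow> 'v::ab_group_add" where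
  "lincomb5 s c0 c1 c2 c3 c4 x0 x1 x2 x3 x4 = s c0 x0 + s c1 x1 + s c2 x2 + s c3 x3 + s c4 x4"

lemma lincomb5_cong:
  "c0 = d0 \<Longrightarrow> c1 = d1 \<Longrightarrow> c2 = d2 \<Longrightarrow> c3 = d3 \<Longrightarrow> c4 = d4 \<Longrightarrow>
    lincomb5 s c0 c1 c2 c3 c4 x0 x1 x2 x3 x4 = lincomb5 s d0 d1 d2 d3 d4 x0 x1 x2 x3 x4"
  by simp

context vector_space
begin

lemma lincomb5_unit_vectors:
  "lincomb5 scale 1 0 0 0 0 x0 x1 x2 x3 x4 = x0" "lincomb5 scale 0 1 0 0 0 x0 x1 x2 x3 x4 = x1"
  "lincomb5 scale 0 0 1 0 0 x0 x1 x2 x3 x4 = x2" "lincomb5 scale 0 0 0 1 0 x0 x1 x2 x3 x4 = x3"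
  "lincomb5 scale 0 0 0 0 1 x0 x1 x2 x3 x4 = x4"
  by (simp_all add: lincomb5_def)

lemma lincomb5_add:
  "lincomb5 scale c0 c1 c2 c3 c4 x0 x1 x2 x3 x4 + lincomb5 scale d0 d1 d2 d3 d4 x0 x1 x2 x3 x4
    = lincomb5 scale (c0 + d0) (c1 + d1) (c2 + d2) (c3 + d3) (c4 + d4) x0 x1 x2 x3 x4"
  by (simp add: lincomb5_def algebra_simps)

lemma lincomb5_diff:
  "lincomb5 scale c0 c1 c2 c3 c4 x0 x1 x2 x3 x4 - lincomb5 scale d0 d1 d2 d3 d4 x0 x1 x2 x3 x4
    = lincomb5 scale (c0 - d0) (c1 - d1) (c2 - d2) (c3 - d3) (c4 - d4) x0 x1 x2 x3 x4"
  by (simp add: lincomb5_def algebra_simps)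

lemma lincomb5_scale:
  "c *s lincomb5 scale c0 c1 c2 c3 c4 x0 x1 x2 x3 x4
    = lincomb5 scale (c * c0) (c * c1) (c * c2) (c * c3) (c * c4) x0 x1 x2 x3 x4"
  by (simp add: lincomb5_def scale_right_distrib)

lemmas lincomb5_normalize = lincomb5_add lincomb5_diff lincomb5_scale

lemma lincomb5_transfer:
  assumes "lincomb5 scale c0 c1 c2 c3 c4 x0 x1 x2 x3 x4 = lincomb5 scale d0 d1 d2 d3 d4 x0 x1 x2 x3 x4"
    and "e0 - f0 = c0 - d0" "e1 - f1 = c1 - d1" "e2 - f2 = c2 - d2" "e3 - f3 = c3 - d3" "e4 - f4 = c4 - d4"
  shows "lincomb5 scale e0 e1 e2 e3 e4 x0 x1 x2 x3 x4 = lincomb5 scale f0 f1 f2 f3 f4 x0 x1 x2 x3 x4"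
proof -
  have "lincomb5 scale e0 e1 e2 e3 e4 x0 x1 x2 x3 x4 - lincomb5 scale f0 f1 f2 f3 f4 x0 x1 x2 x3 x4
     = lincomb5 scale c0 c1 c2 c3 c4 x0 x1 x2 x3 x4 - lincomb5 scale d0 d1 d2 d3 d4 x0 x1 x2 x3 x4"
    by (simp only: lincomb5_diff assms(2-))
  then show ?thesis using assms(1) by simp
qed

lemma eq_scale_add_iff:
  assumes "h \<noteq> 0"
  shows "w = h *s (y + z) \<longleftrightarrow> y = inverse h *s w - z"
proof
  assume "w = h *s (y + z)"
  then show "y = inverse h *s w - z" using assms by simp
next
  assume "y = inverse h *s w - z"
  then show "w = h *s (y + z)" using assms by simp
qed

(* Expand the cubic relation at w1 in w0, w1, w2, w3 and B w3: coeff_k makes the coefficient of w_k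
   the claimed one (zero for w0). If p1 = 0, the vector w0 drops out and its A-image is not needed. *)
lemma cubic_relation_step:
  fixes A B :: "'b \<Rightarrow> 'b"
  assumes "Vector_Spaces.linear scale scale A" and "Vector_Spaces.linear scale scale B"
    and A1: "A w1 = w2 + t1 *s w1" and A2: "A w2 = w3 + t2 *s w2"
    and B1: "B w1 = s1 *s w1 + p1 *s w0" and B2: "B w2 = s2 *s w2 + p2 *s w1"
    and A0: "p1 = 0 \<or> A w0 = w1 + t0 *s w0"
    and cubic: "A (A (B w1)) - Q *s A (B (A w1)) + B (A (A w1)) + K1 *s B w1
                  = K2 *s (ws *s w1) - K3 *s (we *s A w1)"
    and coeff0: "p1 * (t0^2 - Q * t1 * t0 + t1^2 + K1) = 0"
    and coeff1: "2 * s1 * t1^2 + p1 * (t0 + t1) - Q * (p2 + t1 * s1) * t1 - Q * t1 * p1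
                  + (t1 + t2) * p2 + K1 * s1 - K2 * ws + K3 * we * t1 + e = 0"
    and coeff2: "s1 * (t1 + t2) + p1 - Q * (s2 * t2 + p2 + t1 * s1) + p3 + (t1 + t2) * s2 + K3 * we = 0"
    and coeff3: "s1 - Q * s2 + s3 = 0"
  shows "B w3 = s3 *s w3 + p3 *s w2 + e *s w1"
proof -
  interpret A: Vector_Spaces.linear scale scale A by fact
  interpret B: Vector_Spaces.linear scale scale B by fact
  define w4 where "w4 = B w3"
  note linearity = A.add A.diff A.scale A.zero B.add B.diff B.scale B.zero
  note unit_vectors = lincomb5_unit_vectors[of w0 w1 w2 w3 w4, symmetric]
  consider (vanishing) "p1 = 0" | (raising) "A w0 = w1 + t0 *s w0" using A0 by blast
  then show ?thesis
  proof cases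
    case vanishing
    with B1 have B1': "B w1 = s1 *s w1" by simp
    from cubic show ?thesis
      apply (simp only: linearity A1 A2 B1' B2 w4_def[symmetric] scale_zero_left scale_zero_right)
      apply (simp only: unit_vectors lincomb5_normalize cong: lincomb5_cong)
      apply (erule lincomb5_transfer)
      using coeff1 coeff2 coeff3 vanishing by ((simp; fail) | algebra)+
  next
    case raising
    from cubic show ?thesis
      apply (simp only: linearity raising A1 A2 B1 B2 w4_def[symmetric] scale_zero_left scale_zero_right)
      apply (simp only: unit_vectors lincomb5_normalize cong: lincomb5_cong)
      apply (erule lincomb5_transfer)
      using coeff0 coeff1 coeff2 coeff3 by ((simp; fail) | algebra)+
  qed
qed

lemma commuting_eigenvector_raising:
  assumes "Vector_Spaces.linear scale scale Z" and "Vector_Spaces.linear scale scale A"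
    and "\<And>x. Z (A x) = A (Z x)"
    and "Z (u 0) = s *s u 0" and "\<And>i. u (Suc i) = A (u i) - t i *s u i"
  shows "Z (u i) = s *s u i"
proof -
  interpret Z: Vector_Spaces.linear scale scale Z by fact
  interpret A: Vector_Spaces.linear scale scale A by fact
  show ?thesis
    by (induction i) (simp_all add: assms(3-5) Z.diff Z.scale A.scale scale_right_diff_distrib mult.commute)
qed

end

lemma tri_moduleD:
  assumes "tri_module q sc A B C"
  shows "vector_space sc" "Vector_Spaces.linear sc sc A" "Vector_Spaces.linear sc sc B"
    "Vector_Spaces.linear sc sc C"
    "tri_beta q sc A B C (A x) = A (tri_beta q sc A B C x)"
    "tri_gamma q sc A B C (A x) = A (tri_gamma q sc A B C x)"
  using assms unfolding tri_module_def by auto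

lemma (in vector_space) linear_tri_combination:
  assumes "Vector_Spaces.linear scale scale X" "Vector_Spaces.linear scale scale Y"
    "Vector_Spaces.linear scale scale Z"
  shows "Vector_Spaces.linear scale scale (\<lambda>x. h *s (X x + k *s (p *s Y (Z x) - r *s Z (Y x))))"
proof -
  interpret X: Vector_Spaces.linear scale scale X by fact
  interpret Y: Vector_Spaces.linear scale scale Y by fact
  interpret Z: Vector_Spaces.linear scale scale Z by fact
  show ?thesis
    unfolding Vector_Spaces.linear_iff
    by (simp add: vector_space_axioms X.add Y.add Z.add X.scale Y.scale Z.scale algebra_simps)
qed

lemma tri_module_linear_beta_gamma:
  assumes "tri_module q sc A B C"
  shows "Vector_Spaces.linear sc sc (tri_beta q sc A B C)" "Vector_Spaces.linear sc sc (tri_gamma q sc A B C)"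
proof -
  interpret vector_space sc using assms by (rule tri_moduleD)
  show "Vector_Spaces.linear sc sc (tri_beta q sc A B C)" "Vector_Spaces.linear sc sc (tri_gamma q sc A B C)"
    unfolding tri_beta_def[abs_def] tri_gamma_def[abs_def]
    by (rule linear_tri_combination; use tri_moduleD[OF assms] in simp)+
qed

(* gamma (A x) = A (gamma x) expresses both C (A x) and A (C x) through gamma (A x); substituting
   them into beta x eliminates C. *)
lemma tri_module_cubic_relation:
  assumes tm: "tri_module q sc A B C" and "q \<noteq> 0" and "q ^ 4 \<noteq> 1"
  shows "A (A (B x)) - sc (q^2 + inverse q^2) (A (B (A x))) + B (A (A x)) + sc ((q^2 - inverse q^2)^2) (B x)
    = sc ((q^2 - inverse q^2) * (q - inverse q)) (tri_beta q sc A B C x)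
      - sc ((q - inverse q)^2) (tri_gamma q sc A B C (A x))"
proof -
  interpret vector_space sc using tm by (rule tri_moduleD)
  interpret A: Vector_Spaces.linear sc sc A using tm by (rule tri_moduleD)
  define h k where "h = q + inverse q" and "k = inverse (q^2 - inverse q^2)"
  have q_nz: "q + inverse q \<noteq> 0" "q^2 - inverse q^2 \<noteq> 0"
    using q_inverse_combinations_nonzero assms(2,3) by auto
  have "h \<noteq> 0" using q_nz by (simp add: h_def)
  have inverses: "q * inverse q = 1" "k * (q^2 - inverse q^2) = 1" "inverse h * h = 1"
    using q_nz \<open>q \<noteq> 0\<close> by (simp_all add: h_def k_def)
  define P R S T G where "P = A (A (B x))" and "R = A (B (A x))" and "S = B (A (A x))"
    and "T = B x" and "G = tri_gamma q sc A B C (A x)"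
  have "G = sc h (C (A x) + sc k (sc q R - sc (inverse q) S))"
    by (simp add: tri_gamma_def h_def k_def G_def R_def S_def)
  then have CA: "C (A x) = sc (inverse h) G - sc k (sc q R - sc (inverse q) S)"
    by (simp only: eq_scale_add_iff[OF \<open>h \<noteq> 0\<close>])
  have "G = sc h (A (C x) + sc k (sc q P - sc (inverse q) R))"
    unfolding G_def tri_moduleD(6)[OF tm]
    by (simp add: tri_gamma_def h_def k_def P_def R_def A.add A.diff A.scale)
  then have AC: "A (C x) = sc (inverse h) G - sc k (sc q P - sc (inverse q) R)"
    by (simp only: eq_scale_add_iff[OF \<open>h \<noteq> 0\<close>])
  have beta: "tri_beta q sc A B C x = sc h (T + sc k (sc q (C (A x)) - sc (inverse q) (A (C x))))"
    by (simp add: tri_beta_def h_def k_def T_def)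
  note unit_vectors = lincomb5_unit_vectors[of P R S T G, symmetric]
  have "P - sc (q^2 + inverse q^2) R + S + sc ((q^2 - inverse q^2)^2) T
    = sc ((q^2 - inverse q^2) * (q - inverse q)) (tri_beta q sc A B C x) - sc ((q - inverse q)^2) G"
    unfolding beta CA AC
    apply (simp only: unit_vectors lincomb5_normalize cong: lincomb5_cong)
    apply (rule lincomb5_cong)
    subgoal using inverses(1,2) h_def by algebra
    subgoal using inverses(1,2) h_def by algebra
    subgoal using inverses(1,2) h_def by algebra
    subgoal using inverses(1,2) h_def by algebra
    subgoal using inverses(1,2,3) by algebra
    done
  then show ?thesis by (simp only: P_def R_def S_def T_def G_def)
qed

lemma tri_gamma_eq_scale_iff:
  assumes "vector_space sc" and "q \<noteq> 0" and "q ^ 4 \<noteq> 1"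
  shows "tri_gamma q sc A B C x = sc g x \<longleftrightarrow>
    C x = sc (inverse (q + inverse q))
            (sc g x - sc (inverse (q - inverse q)) (sc q (A (B x)) - sc (inverse q) (B (A x))))"
proof -
  interpret vector_space sc by fact
  have nz: "q + inverse q \<noteq> 0" "q - inverse q \<noteq> 0"
    using q_inverse_combinations_nonzero assms(2,3) by auto
  have "(q + inverse q) * (q - inverse q) = q^2 - inverse q^2" by algebra
  then have k: "inverse (q^2 - inverse q^2) = inverse (q + inverse q) * inverse (q - inverse q)"
    by (metis inverse_mult_distrib)
  show ?thesis
    unfolding tri_gamma_def eq_commute[of _ "sc g x"] eq_scale_add_iff[OF nz(1)] k
    by (simp add: algebra_simps)
qed

lemma lookup_Msc [simp]: "Poly_Mapping.lookup (Msc t x) j = t * Poly_Mapping.lookup x j"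
  unfolding Msc_def by (simp add: Poly_Mapping.map.rep_eq when_def)

lemma keys_Msc: "Poly_Mapping.keys (Msc t x) \<subseteq> Poly_Mapping.keys x"
  by (auto simp: in_keys_iff)

lemma vector_space_Msc: "vector_space (Msc :: 'a::field \<Rightarrow> _)"
  unfolding vector_space_def
  by (auto intro!: poly_mapping_eqI simp: lookup_add algebra_simps)

lemma Msc_single: "Msc t (Poly_Mapping.single i c) = Poly_Mapping.single i (t * c)"
  unfolding Msc_def by simp

lemma MA_single:
  "MA q a lam (Poly_Mapping.single i 1)
     = Poly_Mapping.single i (thetaM q a lam i) + Poly_Mapping.single (Suc i) 1"
  unfolding MA_def by simp

lemma MB_single:
  "MB q a b c lam (Poly_Mapping.single i 1)
     = Poly_Mapping.single i (thetaM_s q b lam i)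
       + (if i = 0 then 0 else Poly_Mapping.single (i - 1) (phiM q a b c lam i))"
  unfolding MB_def by simp

lemma M_hom_C_iff_gamma:
  assumes tm: "tri_module q sc A B C" and q: "q \<noteq> 0" "q ^ 4 \<noteq> 1"
    and lin: "Vector_Spaces.linear Msc sc f"
    and fA: "\<And>x. f (MA q a lam x) = A (f x)" and fB: "\<And>x. f (MB q a b c lam x) = B (f x)"
  shows "f (MC q a b c lam x) = C (f x) \<longleftrightarrow>
    tri_gamma q sc A B C (f x) = sc (gammaM q a b c lam) (f x)"
proof -
  interpret f: Vector_Spaces.linear Msc sc f by fact
  have "f (MC q a b c lam x) = sc (inverse (q + inverse q)) (sc (gammaM q a b c lam) (f x)
      - sc (inverse (q - inverse q)) (sc q (A (B (f x))) - sc (inverse q) (B (A (f x)))))"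
    unfolding MC_def by (simp only: f.scale f.diff fA fB)
  then show ?thesis
    unfolding tri_gamma_eq_scale_iff[OF tri_moduleD(1)[OF tm] q] by metis
qed

definition basis_extension :: "('a::field \<Rightarrow> 'v::ab_group_add \<Rightarrow> 'v) \<Rightarrow> (nat \<Rightarrow> 'v) \<Rightarrow> (nat \<Rightarrow>\<^sub>0 'a) \<Rightarrow> 'v" where
  "basis_extension sc u x = (\<Sum>j\<in>Poly_Mapping.keys x. sc (Poly_Mapping.lookup x j) (u j))"

context vector_space
begin

lemma basis_extension_superset:
  assumes "finite S" "Poly_Mapping.keys x \<subseteq> S"
  shows "basis_extension scale u x = (\<Sum>j\<in>S. Poly_Mapping.lookup x j *s u j)"
  unfolding basis_extension_def
  by (rule sum.mono_neutral_left) (use assms in \<open>auto simp: in_keys_iff\<close>)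

lemma linear_basis_extension: "Vector_Spaces.linear Msc scale (basis_extension scale u)"
  unfolding Vector_Spaces.linear_iff
proof (intro conjI allI)
  show "vector_space (Msc :: 'a \<Rightarrow> _)" by (rule vector_space_Msc)
  show "vector_space scale" by unfold_locales
  fix x y :: "nat \<Rightarrow>\<^sub>0 'a"
  let ?S = "Poly_Mapping.keys x \<union> Poly_Mapping.keys y"
  have S: "finite ?S" by (intro finite_UnI finite_keys)
  have "basis_extension scale u (x + y) = (\<Sum>j\<in>?S. Poly_Mapping.lookup (x + y) j *s u j)"
    by (rule basis_extension_superset) (simp_all add: keys_add)
  also have "\<dots> = (\<Sum>j\<in>?S. Poly_Mapping.lookup x j *s u j) + (\<Sum>j\<in>?S. Poly_Mapping.lookup y j *s u j)"
    by (simp add: lookup_add scale_left_distrib sum.distrib)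
  also have "\<dots> = basis_extension scale u x + basis_extension scale u y"
    by (simp only: basis_extension_superset[OF S Un_upper1] basis_extension_superset[OF S Un_upper2])
  finally show "basis_extension scale u (x + y) = basis_extension scale u x + basis_extension scale u y" .
next
  fix c and x :: "nat \<Rightarrow>\<^sub>0 'a"
  have "basis_extension scale u (Msc c x) = (\<Sum>j\<in>Poly_Mapping.keys x. Poly_Mapping.lookup (Msc c x) j *s u j)"
    by (rule basis_extension_superset) (simp_all add: keys_Msc)
  then show "basis_extension scale u (Msc c x) = c *s basis_extension scale u x"
    by (simp add: basis_extension_def scale_sum_right)
qed

lemma basis_extension_single [simp]: "basis_extension scale u (Poly_Mapping.single i c) = c *s u i"
  unfolding basis_extension_def by simp

lemma basis_extension_MA:
  assumes "Vector_Spaces.linear scale scale A"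
    and "\<And>i. A (u i) = u (Suc i) + thetaM q a lam i *s u i"
  shows "basis_extension scale u (MA q a lam x) = A (basis_extension scale u x)"
proof -
  interpret A: Vector_Spaces.linear scale scale A by fact
  interpret f: Vector_Spaces.linear Msc scale "basis_extension scale u" by (rule linear_basis_extension)
  show ?thesis
    unfolding MA_def f.sum basis_extension_def[of _ _ x] A.sum
    by (rule sum.cong) (simp_all add: f.add A.scale assms(2) algebra_simps)
qed

lemma basis_extension_MB:
  assumes "Vector_Spaces.linear scale scale B"
    and "\<And>i. B (u i) = thetaM_s q b lam i *s u i + phiM q a b c lam i *s u (i - 1)"
  shows "basis_extension scale u (MB q a b c lam x) = B (basis_extension scale u x)"
proof -
  interpret B: Vector_Spaces.linear scale scale B by fact
  interpret f: Vector_Spaces.linear Msc scale "basis_extension scale u" by (rule linear_basis_extension)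
  show ?thesis
    unfolding MB_def f.sum basis_extension_def[of _ _ x] B.sum
    by (rule sum.cong) (auto simp add: f.add B.scale assms(2) algebra_simps)
qed

lemma basis_extension_eigenvector:
  assumes "Vector_Spaces.linear scale scale Z" and "\<And>i. Z (u i) = s *s u i"
  shows "Z (basis_extension scale u x) = s *s basis_extension scale u x"
proof -
  interpret Z: Vector_Spaces.linear scale scale Z by fact
  show ?thesis
    unfolding basis_extension_def Z.sum by (simp add: Z.scale assms(2) scale_sum_right mult.commute)
qed

end

lemma B_first_raising:
  assumes "vector_space sc" and "Vector_Spaces.linear sc sc B"
    and nz: "q \<noteq> 0" "a \<noteq> 0" "b \<noteq> 0" "c \<noteq> 0" "lam \<noteq> 0"
    and B0: "B v = sc (thetaM_s q b lam 0) v"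
    and B1: "B (A v) - sc (thetaM_s q b lam 1) (A v) = sc ((q - inverse q) * ph) v"
  shows "B (A v - sc (thetaM q a lam 0) v)
    = sc (thetaM_s q b lam 1) (A v - sc (thetaM q a lam 0) v)
      + sc (phiM q a b c lam 1 + (q - inverse q) * (ph - varphiM q a b c lam)) v"
proof -
  interpret vector_space sc by fact
  interpret B: Vector_Spaces.linear sc sc B by fact
  have phi1: "phiM q a b c lam 1 = thetaM q a lam 0 * (thetaM_s q b lam 1 - thetaM_s q b lam 0)
      + (q - inverse q) * varphiM q a b c lam"
    using qphi_first[OF nz] by (simp add: thetaM_eq_qtheta thetaM_s_eq_qtheta phiM_eq_qphi)
  have B1': "B (A v) = sc (thetaM_s q b lam 1) (A v) + sc ((q - inverse q) * ph) v"
    using B1 by (simp add: diff_eq_eq add.commute)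
  let ?u = "A v - sc (thetaM q a lam 0) v"
  have "B ?u - sc (thetaM_s q b lam 1) ?u
      = sc ((q - inverse q) * ph - thetaM q a lam 0 * (thetaM_s q b lam 0 - thetaM_s q b lam 1)) v"
    by (simp add: B.diff B.scale B0 B1' algebra_simps)
  moreover have "(q - inverse q) * ph - thetaM q a lam 0 * (thetaM_s q b lam 0 - thetaM_s q b lam 1)
      = phiM q a b c lam 1 + (q - inverse q) * (ph - varphiM q a b c lam)"
    using phi1 by algebra
  ultimately show ?thesis by (metis add.commute diff_eq_eq)
qed

(* omega* enters only through the coefficient of w1, which qphi_beta_relation turns into a multiple
   of ws - betaM. *)
lemma tri_module_B_step:
  fixes sc :: "'a::field \<Rightarrow> 'v::ab_group_add \<Rightarrow> 'v"
  assumes tm: "tri_module q sc A B C" and q: "q \<noteq> 0" "q ^ 4 \<noteq> 1"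
    and nz: "a \<noteq> 0" "b \<noteq> 0" "c \<noteq> 0" "lam \<noteq> 0"
    and A1: "A w1 = w2 + sc (thetaM q a lam i) w1"
    and A2: "A w2 = w3 + sc (thetaM q a lam (Suc i)) w2"
    and B1: "B w1 = sc (thetaM_s q b lam i) w1 + sc (phiM q a b c lam i) w0"
    and B2: "B w2 = sc (thetaM_s q b lam (Suc i)) w2 + sc (phiM q a b c lam (Suc i)) w1"
    and A0: "i = 0 \<or> A w0 = w1 + sc (thetaM q a lam (i - 1)) w0"
    and beta: "tri_beta q sc A B C w1 = sc ws w1"
    and gamma: "tri_gamma q sc A B C w1 = sc (gammaM q a b c lam) w1"
  shows "B w3 = sc (thetaM_s q b lam (Suc (Suc i))) w3 + sc (phiM q a b c lam (Suc (Suc i))) w2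
    + sc ((q^2 - inverse q^2) * (q - inverse q) * (ws - betaM q a b c lam)) w1"
proof -
  interpret vector_space sc using tm by (rule tri_moduleD)
  interpret A: Vector_Spaces.linear sc sc A using tm by (rule tri_moduleD)
  define X where "X = q ^ i"
  have "X \<noteq> 0" using q by (simp add: X_def)
  have shifts: "q ^ Suc i = X * q" "q ^ Suc (Suc i) = X * q^2"
    by (simp_all add: X_def power2_eq_square)
  note params = thetaM_eq_qtheta thetaM_s_eq_qtheta phiM_eq_qphi shifts X_def[symmetric]
  have A0': "qphi q a b c lam X = 0 \<or> A w0 = w1 + sc (qtheta a lam (X * inverse q)) w0"
  proof (cases i)
    case 0
    then show ?thesis by (simp add: X_def qphi_def)
  next
    case (Suc j)
    then have "X * inverse q = q ^ j" using q by (simp add: X_def)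
    with A0 Suc show ?thesis by (simp add: thetaM_eq_qtheta)
  qed
  have cubic: "A (A (B w1)) - sc (q^2 + inverse q^2) (A (B (A w1))) + B (A (A w1))
      + sc ((q^2 - inverse q^2)^2) (B w1)
    = sc ((q^2 - inverse q^2) * (q - inverse q)) (sc ws w1)
      - sc ((q - inverse q)^2) (sc (gammaM q a b c lam) (A w1))"
    using tri_module_cubic_relation[OF tm q, of w1]
    by (simp add: tri_moduleD(6)[OF tm] beta gamma A.scale)
  show ?thesis
    unfolding params
    apply (rule cubic_relation_step[OF tri_moduleD(2,3)[OF tm] A1[unfolded params] A2[unfolded params]
          B1[unfolded params] B2[unfolded params] A0' cubic])
    subgoal using qtheta_quadratic_relation[OF q(1) nz(1,4) \<open>X \<noteq> 0\<close>] by simp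
    subgoal using qphi_beta_relation[OF q(1) nz \<open>X \<noteq> 0\<close>] by algebra
    subgoal by (rule qphi_gamma_relation[OF q(1) nz \<open>X \<noteq> 0\<close>])
    subgoal by (rule qtheta_recurrence[OF q(1) nz(2,4) \<open>X \<noteq> 0\<close>])
    done
qed

lemma tri_module_B_recurrence:
  fixes sc :: "'a::field \<Rightarrow> 'v::ab_group_add \<Rightarrow> 'v"
  assumes tm: "tri_module q sc A B C" and q: "q \<noteq> 0" "q ^ 4 \<noteq> 1"
    and nz: "a \<noteq> 0" "b \<noteq> 0" "c \<noteq> 0" "lam \<noteq> 0"
    and raise: "\<And>i. u (Suc i) = A (u i) - sc (thetaM q a lam i) (u i)"
    and beta: "\<And>i. tri_beta q sc A B C (u i) = sc (betaM q a b c lam) (u i)"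
    and gamma: "\<And>i. tri_gamma q sc A B C (u i) = sc (gammaM q a b c lam) (u i)"
    and B0: "B (u 0) = sc (thetaM_s q b lam 0) (u 0)"
    and B1: "B (u 1) = sc (thetaM_s q b lam 1) (u 1) + sc (phiM q a b c lam 1) (u 0)"
  shows "B (u i) = sc (thetaM_s q b lam i) (u i) + sc (phiM q a b c lam i) (u (i - 1))"
proof -
  interpret vector_space sc using tm by (rule tri_moduleD)
  have A_u: "A (u i) = u (Suc i) + sc (thetaM q a lam i) (u i)" for i
    using raise[of i] by simp
  have "B (u i) = sc (thetaM_s q b lam i) (u i) + sc (phiM q a b c lam i) (u (i - 1))
      \<and> B (u (Suc i)) = sc (thetaM_s q b lam (Suc i)) (u (Suc i)) + sc (phiM q a b c lam (Suc i)) (u i)"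
  proof (induction i)
    case 0
    show ?case using B0 B1 by simp
  next
    case (Suc i)
    have A0: "i = 0 \<or> A (u (i - 1)) = u i + sc (thetaM q a lam (i - 1)) (u (i - 1))"
      using A_u by (cases i) auto
    have "B (u (Suc (Suc i))) = sc (thetaM_s q b lam (Suc (Suc i))) (u (Suc (Suc i)))
        + sc (phiM q a b c lam (Suc (Suc i))) (u (Suc i))
        + sc ((q^2 - inverse q^2) * (q - inverse q) * (betaM q a b c lam - betaM q a b c lam)) (u i)"
      using Suc.IH by (intro tri_module_B_step[OF tm q nz A_u[of i] A_u[of "Suc i"] _ _ A0 beta[of i] gamma[of i]]) simp_all
    with Suc.IH show ?case by simp
  qed
  then show ?thesis by blast
qed

lemma feasible_imp_M_hom:
  fixes sc :: "'a::field \<Rightarrow> 'v::ab_group_add \<Rightarrow> 'v"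
  assumes tm: "tri_module q sc A B C" and q: "q \<noteq> 0" "q ^ 4 \<noteq> 1"
    and nz: "a \<noteq> 0" "b \<noteq> 0" "c \<noteq> 0" "lam \<noteq> 0"
    and B0: "B v = sc (thetaM_s q b lam 0) v"
    and B1: "B (A v) - sc (thetaM_s q b lam 1) (A v) = sc ((q - inverse q) * varphiM q a b c lam) v"
    and beta: "tri_beta q sc A B C v = sc (betaM q a b c lam) v"
    and gamma: "tri_gamma q sc A B C v = sc (gammaM q a b c lam) v"
  shows "\<exists>f. M_hom q a b c lam sc A B C f \<and> f (Poly_Mapping.single 0 1) = v"
proof -
  interpret vector_space sc using tm by (rule tri_moduleD)
  note linearity = tri_moduleD(2-4)[OF tm] tri_module_linear_beta_gamma[OF tm]
  define u where "u = rec_nat v (\<lambda>i x. A x - sc (thetaM q a lam i) x)"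
  have u0: "u 0 = v" and raise: "\<And>i. u (Suc i) = A (u i) - sc (thetaM q a lam i) (u i)"
    by (simp_all add: u_def)
  have beta_u: "tri_beta q sc A B C (u i) = sc (betaM q a b c lam) (u i)" for i
    by (rule commuting_eigenvector_raising[of "tri_beta q sc A B C" A u "betaM q a b c lam" "thetaM q a lam",
          OF linearity(4,1) tri_moduleD(5)[OF tm] _ raise]) (simp add: u0 beta)
  have gamma_u: "tri_gamma q sc A B C (u i) = sc (gammaM q a b c lam) (u i)" for i
    by (rule commuting_eigenvector_raising[of "tri_gamma q sc A B C" A u "gammaM q a b c lam" "thetaM q a lam",
          OF linearity(5,1) tri_moduleD(6)[OF tm] _ raise]) (simp add: u0 gamma)
  have "B (u 1) = sc (thetaM_s q b lam 1) (u 1) + sc (phiM q a b c lam 1) (u 0)"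
    using B_first_raising[where A = A, OF tri_moduleD(1,3)[OF tm] q(1) nz B0 B1] by (simp add: u0 raise[of 0])
  then have B_u: "B (u i) = sc (thetaM_s q b lam i) (u i) + sc (phiM q a b c lam i) (u (i - 1))" for i
    by (rule tri_module_B_recurrence[where u = u, OF tm q nz raise beta_u gamma_u B0[folded u0]])
  define f where "f = basis_extension sc u"
  have lin: "Vector_Spaces.linear Msc sc f"
    unfolding f_def by (rule linear_basis_extension)
  have fA: "f (MA q a lam x) = A (f x)" for x
    unfolding f_def by (rule basis_extension_MA[OF linearity(1)]) (simp add: raise)
  have fB: "f (MB q a b c lam x) = B (f x)" for x
    unfolding f_def by (rule basis_extension_MB[OF linearity(2) B_u])
  have fC: "f (MC q a b c lam x) = C (f x)" for x
    unfolding M_hom_C_iff_gamma[OF tm q lin fA fB] unfolding f_def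
    by (rule basis_extension_eigenvector[OF linearity(5) gamma_u])
  have "f (Poly_Mapping.single 0 1) = v" by (simp add: f_def u0 del: single_one)
  with lin fA fB fC show ?thesis unfolding M_hom_def by blast
qed

lemma M_hom_on_basis:
  assumes "M_hom q a b c lam sc A B C f" and u: "\<And>i. u i = f (Poly_Mapping.single i 1)"
  shows "A (u i) = u (Suc i) + sc (thetaM q a lam i) (u i)"
    and "B (u i) = sc (thetaM_s q b lam i) (u i) + sc (phiM q a b c lam i) (u (i - 1))"
proof -
  have lin: "Vector_Spaces.linear Msc sc f" and fA: "\<And>x. f (MA q a lam x) = A (f x)"
    and fB: "\<And>x. f (MB q a b c lam x) = B (f x)"
    using assms(1) unfolding M_hom_def by auto
  interpret f: Vector_Spaces.linear Msc sc f by (fact lin)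
  have f_single: "f (Poly_Mapping.single i t) = sc t (u i)" for i t
    using f.scale[of t "Poly_Mapping.single i 1"] by (simp add: Msc_single u del: single_one)
  show "A (u i) = u (Suc i) + sc (thetaM q a lam i) (u i)"
    using fA[of "Poly_Mapping.single i 1"] by (simp add: MA_single f.add f_single add.commute del: single_one)
  show "B (u i) = sc (thetaM_s q b lam i) (u i) + sc (phiM q a b c lam i) (u (i - 1))"
    using fB[of "Poly_Mapping.single i 1"] by (cases i) (simp_all add: MB_single f.add f_single del: single_one)
qed

lemma M_hom_gamma_on_image:
  assumes "tri_module q sc A B C" and "q \<noteq> 0" "q ^ 4 \<noteq> 1" and "M_hom q a b c lam sc A B C f"
  shows "tri_gamma q sc A B C (f x) = sc (gammaM q a b c lam) (f x)"
  using assms(4) M_hom_C_iff_gamma[OF assms(1-3)] unfolding M_hom_def by blast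

lemma M_hom_imp_feasible_params:
  fixes sc :: "'a::field \<Rightarrow> 'v::ab_group_add \<Rightarrow> 'v"
  assumes tm: "tri_module q sc A B C" and q: "q \<noteq> 0" "q ^ 4 \<noteq> 1"
    and nz: "a \<noteq> 0" "b \<noteq> 0" "c \<noteq> 0" "lam \<noteq> 0" and "v \<noteq> 0"
    and hom: "M_hom q a b c lam sc A B C f" and f_m0: "f (Poly_Mapping.single 0 1) = v"
    and B0: "B v = sc (thetaM_s q b lam 0) v"
    and B1: "B (A v) - sc (thetaM_s q b lam 1) (A v) = sc ((q - inverse q) * ph) v"
    and beta: "tri_beta q sc A B C v = sc ws v"
    and gamma: "tri_gamma q sc A B C v = sc we v"
  shows "ph = varphiM q a b c lam \<and> ws = betaM q a b c lam \<and> we = gammaM q a b c lam"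
proof -
  interpret vector_space sc using tm by (rule tri_moduleD)
  define u where "u i = f (Poly_Mapping.single i 1)" for i
  note A_u = M_hom_on_basis(1)[OF hom u_def] and B_u = M_hom_on_basis(2)[OF hom u_def]
  have "u 0 = v" using f_m0 by (simp add: u_def del: single_one)
  have q_nz: "q - inverse q \<noteq> 0" "(q^2 - inverse q^2) * (q - inverse q) \<noteq> 0"
    using q_inverse_combinations_nonzero[OF q] by auto
  have "tri_gamma q sc A B C v = sc (gammaM q a b c lam) v"
    using M_hom_gamma_on_image[OF tm q hom, of "Poly_Mapping.single 0 1"] unfolding f_m0 .
  then have we: "we = gammaM q a b c lam"
    using gamma \<open>v \<noteq> 0\<close> by simp
  have "u 1 = A v - sc (thetaM q a lam 0) v" using A_u[of 0] \<open>u 0 = v\<close> by simp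
  then have "sc (phiM q a b c lam 1 + (q - inverse q) * (ph - varphiM q a b c lam)) v
      = sc (phiM q a b c lam 1) v"
    using B_first_raising[where A = A, OF tri_moduleD(1,3)[OF tm] q(1) nz B0 B1] B_u[of 1] \<open>u 0 = v\<close> by simp
  then have ph: "ph = varphiM q a b c lam"
    using \<open>v \<noteq> 0\<close> q_nz by simp
  have "B (u (Suc (Suc 0))) = sc (thetaM_s q b lam (Suc (Suc 0))) (u (Suc (Suc 0)))
      + sc (phiM q a b c lam (Suc (Suc 0))) (u (Suc 0))
      + sc ((q^2 - inverse q^2) * (q - inverse q) * (ws - betaM q a b c lam)) (u 0)"
    by (rule tri_module_B_step[OF tm q nz A_u[of 0] A_u[of "Suc 0"] B_u[of 0] B_u[of "Suc 0", unfolded diff_Suc_1]])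
      (simp_all add: \<open>u 0 = v\<close> beta gamma we)
  then have "sc ((q^2 - inverse q^2) * (q - inverse q) * (ws - betaM q a b c lam)) v = 0"
    using B_u[of "Suc (Suc 0)"] \<open>u 0 = v\<close> by simp
  then have ws: "ws = betaM q a b c lam"
    using \<open>v \<noteq> 0\<close> q_nz by simp
  from ph ws we show ?thesis by blast
qed

theorem theorem3p3:
  fixes q a b c lam mu ph ws we :: "'a::alg_closed_field"
    and sc :: "'a \<Rightarrow> 'v::ab_group_add \<Rightarrow> 'v"
    and A B C :: "'v \<Rightarrow> 'v" and v :: 'v and d :: nat
  assumes "root_of_unity_order q d" and "d \<notin> {1, 2, 4}"
    and "a \<noteq> 0" "b \<noteq> 0" "c \<noteq> 0" "lam \<noteq> 0" "mu \<noteq> 0"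
    and "tri_module q sc A B C"
    and "v \<noteq> 0"
    and "B v = sc (mu + inverse mu) v"
    and "B (A v) - sc (mu * q^2 + inverse mu * inverse q ^ 2) (A v) = sc ((q - inverse q) * ph) v"
    and "tri_beta q sc A B C v = sc ws v"
    and "tri_gamma q sc A B C v = sc we v"
  shows "feasible q a b c lam mu ph ws we \<longleftrightarrow>
           (mu = b * inverse lam \<and>
            (\<exists>f. M_hom q a b c lam sc A B C f \<and> f (Poly_Mapping.single 0 1) = v))"
proof (cases "mu = b * inverse lam")
  case mu: True
  have q: "q \<noteq> 0" "q ^ 4 \<noteq> 1"
    using root_of_unity_order_nonzero root_of_unity_order_pow4_neq_1 assms(1,2) by auto
  note nz = assms(3-6) and tm = assms(8)
  have B0: "B v = sc (thetaM_s q b lam 0) v"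
    and B1: "B (A v) - sc (thetaM_s q b lam 1) (A v) = sc ((q - inverse q) * ph) v"
    using assms(10,11) by (simp_all add: mu thetaM_s_def mult.commute power_inverse)
  show ?thesis
  proof
    assume "feasible q a b c lam mu ph ws we"
    with B1 assms(12,13) show "mu = b * inverse lam \<and> (\<exists>f. M_hom q a b c lam sc A B C f \<and> f (Poly_Mapping.single 0 1) = v)"
      using feasible_imp_M_hom[OF tm q nz B0] by (simp add: feasible_iff)
  next
    assume "mu = b * inverse lam \<and> (\<exists>f. M_hom q a b c lam sc A B C f \<and> f (Poly_Mapping.single 0 1) = v)"
    then obtain f where "M_hom q a b c lam sc A B C f" and "f (Poly_Mapping.single 0 1) = v" by blast
    with M_hom_imp_feasible_params[OF tm q nz assms(9) _ _ B0 B1 assms(12,13)] show "feasible q a b c lam mu ph ws we"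
      by (simp add: feasible_iff mu)
  qed
next
  case False
  then show ?thesis by (simp add: feasible_def)
qed

end
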